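(* Let $t\ge 0$ be an integer and consider any complete run of the exponential-edge chip-firing process starting with $2^{t+2}$ chips with distinct labels at site $0$. For $0\le k\le t$ and $2\le j\le 2(t-k)+3$, after the $j$-th firing move at site $k$ (counted from the start), the $2^{t-k}$ chips with the largest labels are all at positions greater than $k$. Similarly, for $-t\le k\le 0$ and $2\le j\le 2(t-|k|)+3$, after the $j$-th firing move at site $k$, the $2^{t+k}$ chips with the smallest labels are all at positions less than $k$.
   Context: Exponential-edge graph with parameter $t$: the vertex set is $\mathbb{Z}$; for each $0\le k\le t$ there are $2^{t-k}$ parallel edges between $k$ and $k+1$ and $2^{t-k}$ parallel edges between $-k$ and $-k-1$; all other pairs of adjacent integers are joined by a single edge. If a site has $a$ edges to its left neighbor and $b$ edges to its right neighbor, a firing move at that site chooses $a+b$ chips present there and sends the $a$ smallest of them to the left neighbor and the $b$ largest to the right neighbor. A complete run is a sequence of legal firing moves ending in a configuration where no firing move is possible. In such a run, site $k$ fires exactly $2(t-|k|)+3$ times for $-t-1\le k\le t+1$. *)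

theory Defs
  imports Main
begin

text \<open>Chips are labelled 0..N-1 (labels ordered as natural numbers).
  A configuration assigns each chip label its position in the integers.
  ew t m = number of parallel edges between m and m+1.\<close>

definition ew :: "nat \<Rightarrow> int \<Rightarrow> nat" where
  "ew t m = (if 0 \<le> m \<and> m \<le> int t then 2 ^ nat (int t - m)
             else if - int t - 1 \<le> m \<and> m \<le> -1 then 2 ^ nat (int t + m + 1)
             else 1)"

definition fire :: "nat \<Rightarrow> nat \<Rightarrow> (nat \<Rightarrow> int) \<Rightarrow> int \<Rightarrow> nat set \<Rightarrow> (nat \<Rightarrow> int) \<Rightarrow> bool" where
  "fire t N c k S c' \<longleftrightarrow>
     S \<subseteq> {i. i < N \<and> c i = k} \<and> card S = ew t (k - 1) + ew t k \<and>
     c' = (\<lambda>i. if i \<in> S then (if card {j\<in>S. j < i} < ew t (k - 1) then k - 1 else k + 1)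
               else c i)"

definition stable :: "nat \<Rightarrow> nat \<Rightarrow> (nat \<Rightarrow> int) \<Rightarrow> bool" where
  "stable t N c \<longleftrightarrow> (\<forall>k. card {i. i < N \<and> c i = k} < ew t (k - 1) + ew t k)"

text \<open>A complete run from all N chips at site 0: moves!n = (site, chosen chips),
  cs!n = configuration before move n, last cs = final (stable) configuration.\<close>
definition complete_run :: "nat \<Rightarrow> nat \<Rightarrow> (int \<times> nat set) list \<Rightarrow> (nat \<Rightarrow> int) list \<Rightarrow> bool" where
  "complete_run t N moves cs \<longleftrightarrow>
     length cs = Suc (length moves) \<and> cs ! 0 = (\<lambda>_. 0) \<and>
     (\<forall>n < length moves. fire t N (cs ! n) (fst (moves ! n)) (snd (moves ! n)) (cs ! Suc n)) \<and>
     stable t N (last cs)"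

end

theory Submission
  imports Defs
begin

text \<open>
  A firing at site \<open>s\<close> moves \<open>ew t s\<close> chips across the edge \<open>{s, s+1}\<close> and
  \<open>ew t (s - 1)\<close> chips across \<open>{s - 1, s}\<close>, so the number of chips beyond every edge
  (on the side away from the origin) is a multiple of the edge's multiplicity. Along a run
  started with \<open>2^(t+2)\<close> chips at the origin these multiples stay in \<open>{0, 1, 2}\<close>, and a
  site \<open>s \<ge> 1\<close> can only fire while the edge to its left is at level 2 and the edge to its
  right at level at most 1. Hence, once a site \<open>k \<ge> 0\<close> has fired, every later firing
  at \<open>k\<close> takes exactly all chips present there.

  Along the run, whenever the edge \<open>{k, k+1}\<close> (\<open>0 \<le> k \<le> t\<close>) is at level 2, the
  \<open>ew t k\<close> largest labels lie right of \<open>k\<close>. Before a repeated firing at \<open>k \<ge> 1\<close> the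
  edge \<open>{k - 1, k}\<close> is at level 2, so the \<open>ew t (k - 1) = 2 ew t k\<close> largest labels are at
  sites \<open>\<ge> k\<close>; the firing takes all chips at \<open>k\<close> and sends the \<open>ew t k\<close> largest of
  them to the right, hence all of the \<open>ew t k\<close> largest labels end up right of \<open>k\<close>.

  The statement for negative sites follows by symmetry: reflecting positions and reversing
  labels maps legal runs to legal runs, because \<open>ew t (- m - 1) = ew t m\<close>.
\<close>

lemma ew_pos: "0 < ew t m"
  by (simp add: ew_def)

lemma ew_inner: "0 \<le> m \<Longrightarrow> m \<le> int t \<Longrightarrow> ew t m = 2 ^ nat (int t - m)"
  by (simp add: ew_def)

lemma ew_origin [simp]: "ew t 0 = 2 ^ t" "ew t (-1) = 2 ^ t"
  by (simp_all add: ew_def)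

lemma ew_mirror: "ew t (- m - 1) = ew t m"
proof -
  have "nat (int t - (- m - 1)) = nat (int t + m + 1)" "nat (int t + (- m - 1) + 1) = nat (int t - m)"
    by simp_all
  then show ?thesis
    unfolding ew_def by auto
qed

lemma ew_pred: "1 \<le> s \<Longrightarrow> s \<le> int t \<Longrightarrow> ew t (s - 1) = 2 * ew t s"
proof -
  assume "1 \<le> s" "s \<le> int t"
  then have "nat (int t - (s - 1)) = Suc (nat (int t - s))" by linarith
  with \<open>1 \<le> s\<close> \<open>s \<le> int t\<close> show ?thesis by (simp add: ew_def)
qed

lemma ew_beyond: "int t < s \<Longrightarrow> ew t (s - 1) = 1 \<and> ew t s = 1"
  by (simp add: ew_def)

abbreviation rank :: "'a::linorder set \<Rightarrow> 'a \<Rightarrow> nat" where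
  "rank S i \<equiv> card {j \<in> S. j < i}"

lemma rank_strict_mono_on: "finite S \<Longrightarrow> strict_mono_on S (rank S)"
  by (rule strict_mono_onI) (rule psubset_card_mono, auto)

lemma rank_less_card: "finite S \<Longrightarrow> i \<in> S \<Longrightarrow> rank S i < card S"
  by (rule psubset_card_mono) auto

lemma bij_betw_rank: "finite S \<Longrightarrow> bij_betw (rank S) S {..<card S}"
proof -
  assume S: "finite S"
  have inj: "inj_on (rank S) S"
    using S by (intro strict_mono_on_imp_inj_on rank_strict_mono_on)
  moreover have "rank S ` S \<subseteq> {..<card S}"
    using S rank_less_card by blast
  moreover have "card (rank S ` S) = card {..<card S}"
    using card_image[OF inj] by simp
  ultimately show ?thesis
    by (simp add: bij_betw_def card_subset_eq)
qed

lemma card_rank_less: "finite S \<Longrightarrow> a \<le> card S \<Longrightarrow> card {i \<in> S. rank S i < a} = a"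
proof -
  assume S: "finite S" and a: "a \<le> card S"
  have "bij_betw (rank S) {i \<in> S. rank S i < a} {x \<in> {..<card S}. x < a}"
    using bij_betw_rank[OF S] unfolding bij_betw_def inj_on_def by auto
  then have "card {i \<in> S. rank S i < a} = card {x \<in> {..<card S}. x < a}"
    by (rule bij_betw_same_card)
  also have "{x \<in> {..<card S}. x < a} = {..<a}"
    using a by auto
  finally show ?thesis by simp
qed

lemma rank_add_card_greater:
  assumes "finite S" "i \<in> S"
  shows "rank S i + card {j \<in> S. i < j} + 1 = card S"
proof -
  have "S = {j \<in> S. j < i} \<union> insert i {j \<in> S. i < j}"
    using assms(2) by auto
  also have "card \<dots> = rank S i + card (insert i {j \<in> S. i < j})"
    using assms(1) by (intro card_Un_disjoint) auto
  finally show ?thesis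
    using assms(1) by simp
qed

definition chips_right :: "nat \<Rightarrow> (nat \<Rightarrow> int) \<Rightarrow> int \<Rightarrow> nat" where
  "chips_right N c k = card {i. i < N \<and> k < c i}"

definition chips_at :: "nat \<Rightarrow> (nat \<Rightarrow> int) \<Rightarrow> int \<Rightarrow> nat" where
  "chips_at N c k = card {i. i < N \<and> c i = k}"

lemma chips_right_pred: "chips_right N c (k - 1) = chips_at N c k + chips_right N c k"
proof -
  have "{i. i < N \<and> k - 1 < c i} = {i. i < N \<and> c i = k} \<union> {i. i < N \<and> k < c i}"
    by auto
  then show ?thesis
    unfolding chips_right_def chips_at_def by (simp add: card_Un_disjoint disjoint_iff)
qed

lemma chips_right_split:
  assumes "S \<subseteq> {..<N}"
  shows "chips_right N c k = card {i. i < N \<and> i \<notin> S \<and> k < c i} + card {i \<in> S. k < c i}"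
proof -
  have "finite S"
    using assms finite_subset by blast
  have "{i. i < N \<and> k < c i} = {i. i < N \<and> i \<notin> S \<and> k < c i} \<union> {i \<in> S. k < c i}"
    using assms by auto
  also have "card \<dots> = card {i. i < N \<and> i \<notin> S \<and> k < c i} + card {i \<in> S. k < c i}"
    using \<open>finite S\<close> by (intro card_Un_disjoint) auto
  finally show ?thesis
    unfolding chips_right_def .
qed

lemma chips_right_update:
  assumes "S \<subseteq> {..<N}" "\<And>i. i \<notin> S \<Longrightarrow> c' i = c i"
  shows "chips_right N c' k + card {i \<in> S. k < c i} = chips_right N c k + card {i \<in> S. k < c' i}"
proof -
  have "{i. i < N \<and> i \<notin> S \<and> k < c' i} = {i. i < N \<and> i \<notin> S \<and> k < c i}"
    using assms(2) by auto
  then show ?thesis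
    using chips_right_split[OF assms(1), of c k] chips_right_split[OF assms(1), of c' k] by simp
qed

lemma fire_subset: "fire t N c k S c' \<Longrightarrow> S \<subseteq> {i. i < N \<and> c i = k}"
  by (simp add: fire_def)

lemma fire_card: "fire t N c k S c' \<Longrightarrow> card S = ew t (k - 1) + ew t k"
  by (simp add: fire_def)

lemma fire_unmoved: "fire t N c k S c' \<Longrightarrow> i \<notin> S \<Longrightarrow> c' i = c i"
  by (simp add: fire_def)

lemma fire_moved: "fire t N c k S c' \<Longrightarrow> i \<in> S \<Longrightarrow> c i = k \<and> (c' i = k - 1 \<or> c' i = k + 1)"
  by (auto simp: fire_def)

lemma fire_largest_right:
  assumes f: "fire t N c k S c'" and i: "i \<in> S" "N - ew t k \<le> i"
  shows "c' i = k + 1"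
proof -
  have S: "S \<subseteq> {..<N}"
    using fire_subset[OF f] by auto
  then have fin: "finite S"
    by (rule finite_subset) simp
  have "card {j \<in> S. i < j} \<le> card {i<..<N}"
    using S by (intro card_mono) auto
  then have "ew t (k - 1) \<le> rank S i"
    using rank_add_card_greater[OF fin i(1)] fire_card[OF f] i S by auto
  then show ?thesis
    using f i(1) by (simp add: fire_def)
qed

lemma fire_chips_at:
  assumes f: "fire t N c k S c'"
  shows "ew t (k - 1) + ew t k \<le> chips_at N c k"
proof -
  have "card S \<le> chips_at N c k"
    unfolding chips_at_def by (rule card_mono) (simp_all add: fire_subset[OF f])
  then show ?thesis
    by (simp add: fire_card[OF f])
qed

lemma fire_takes_all:
  assumes "fire t N c k S c'" "chips_at N c k \<le> ew t (k - 1) + ew t k"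
  shows "S = {i. i < N \<and> c i = k}"
  using fire_chips_at[OF assms(1)] assms fire_subset[OF assms(1)]
  by (intro card_subset_eq) (simp_all add: fire_card chips_at_def)

lemma fire_chips_right:
  assumes f: "fire t N c k S c'"
  shows "chips_right N c' k = chips_right N c k + ew t k"
    and "chips_right N c' (k - 1) + ew t (k - 1) = chips_right N c (k - 1)"
    and "m \<noteq> k \<Longrightarrow> m \<noteq> k - 1 \<Longrightarrow> chips_right N c' m = chips_right N c m"
proof -
  let ?a = "ew t (k - 1)" and ?L = "{i \<in> S. rank S i < ew t (k - 1)}"
  have S: "S \<subseteq> {i. i < N \<and> c i = k}" and card_S: "card S = ?a + ew t k"
    using fire_subset[OF f] fire_card[OF f] .
  have fin: "finite S"
    by (rule finite_subset[OF S]) auto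
  have c': "\<And>i. i \<in> S \<Longrightarrow> c' i = (if i \<in> ?L then k - 1 else k + 1)"
    using f by (simp add: fire_def)
  have "card ?L = ?a"
    using card_rank_less[OF fin] card_S by simp
  then have card_right_movers: "card (S - ?L) = ew t k"
    using card_S fin by (simp add: card_Diff_subset)
  have update: "chips_right N c' m + card {i \<in> S. m < c i} = chips_right N c m + card {i \<in> S. m < c' i}" for m
    using S by (intro chips_right_update) (auto simp: fire_unmoved[OF f])
  have before: "{i \<in> S. m < c i} = (if m < k then S else {})" for m
    using S by auto
  have after: "{i \<in> S. m < c' i} = (if m < k - 1 then S else if m < k + 1 then S - ?L else {})" for m
    by (cases "m < k - 1"; cases "m < k + 1") (auto simp: c')
  show "chips_right N c' k = chips_right N c k + ew t k"
    using update[of k] before[of k] after[of k] card_right_movers by simp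
  show "chips_right N c' (k - 1) + ?a = chips_right N c (k - 1)"
    using update[of "k - 1"] before[of "k - 1"] after[of "k - 1"] card_right_movers card_S by simp
  show "chips_right N c' m = chips_right N c m" if "m \<noteq> k" "m \<noteq> k - 1"
    using update[of m] before[of m] after[of m] that by (cases "m < k") auto
qed

lemma fire_keeps_chips_right_pos:
  assumes f: "fire t N c s S c'" and pos: "0 < chips_right N c k"
  shows "0 < chips_right N c' k"
proof -
  consider "s = k" | "s = k + 1" | "s \<noteq> k" "s \<noteq> k + 1" by blast
  then show ?thesis
  proof cases
    case 1
    then show ?thesis using fire_chips_right(1)[OF f] pos by simp
  next
    case 2
    have "ew t k + ew t (k + 1) \<le> chips_at N c (k + 1)"
      using fire_chips_at[OF f] 2 by simp
    moreover have "chips_right N c k = chips_at N c (k + 1) + chips_right N c (k + 1)"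
      using chips_right_pred[of N c "k + 1"] by simp
    ultimately show ?thesis
      using fire_chips_right(2)[OF f] 2 ew_pos[of t "k + 1"] by simp
  next
    case 3
    then show ?thesis using fire_chips_right(3)[OF f, of k] pos by simp
  qed
qed

text \<open>
  Labels outside \<open>{..<N}\<close> are negated as well, so that mirroring is an involution that
  fixes the initial configuration.
\<close>

definition mirror_config :: "nat \<Rightarrow> (nat \<Rightarrow> int) \<Rightarrow> nat \<Rightarrow> int" where
  "mirror_config N c i = (if i < N then - c (N - 1 - i) else - c i)"

definition mirror_chips :: "nat \<Rightarrow> nat set \<Rightarrow> nat set" where
  "mirror_chips N S = (\<lambda>i. N - 1 - i) ` S"

lemma mirror_config_involution [simp]: "mirror_config N (mirror_config N c) = c"
  by (rule ext) (simp add: mirror_config_def)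

lemma mirror_config_zero [simp]: "mirror_config N (\<lambda>_. 0) = (\<lambda>_. 0)"
  by (rule ext) (simp add: mirror_config_def)

lemma inj_on_mirror: "inj_on (\<lambda>i. N - 1 - i) {..<N :: nat}"
  by (rule inj_onI) auto

lemma mirror_image_Collect:
  "(\<lambda>i. N - 1 - i) ` {i. i < N \<and> P i} = {i. i < N \<and> P (N - 1 - i :: nat)}"
proof (intro equalityI subsetI)
  fix x assume "x \<in> {i. i < N \<and> P (N - 1 - i)}"
  then show "x \<in> (\<lambda>i. N - 1 - i) ` {i. i < N \<and> P i}"
    by (intro image_eqI[of x _ "N - 1 - x"]) auto
qed auto

lemma mem_mirror_chips:
  assumes "S \<subseteq> {..<N}"
  shows "i \<in> mirror_chips N S \<longleftrightarrow> i < N \<and> N - 1 - i \<in> S"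
proof -
  have "mirror_chips N S = (\<lambda>i. N - 1 - i) ` {i. i < N \<and> i \<in> S}"
    unfolding mirror_chips_def using assms by (intro arg_cong[where f = "image _"]) auto
  also have "\<dots> = {i. i < N \<and> N - 1 - i \<in> S}"
    by (rule mirror_image_Collect)
  finally show ?thesis by simp
qed

lemma card_mirror_chips: "S \<subseteq> {..<N} \<Longrightarrow> card (mirror_chips N S) = card S"
  unfolding mirror_chips_def by (rule card_image[OF inj_on_subset[OF inj_on_mirror]])

lemma chips_right_mirror: "chips_right N (mirror_config N c) k + chips_right N c (- k - 1) = N"
proof -
  have "chips_right N (mirror_config N c) k = card ((\<lambda>i. N - 1 - i) ` {i. i < N \<and> c i < - k})"
    unfolding chips_right_def mirror_image_Collect
    by (rule arg_cong[where f = card]) (auto simp: mirror_config_def)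
  also have "\<dots> = card {i. i < N \<and> c i < - k}"
    by (intro card_image inj_on_subset[OF inj_on_mirror]) auto
  finally have mirrored: "chips_right N (mirror_config N c) k = card {i. i < N \<and> c i < - k}" .
  have "{..<N} = {i. i < N \<and> c i < - k} \<union> {i. i < N \<and> - k - 1 < c i}"
    by auto
  then have "card {..<N} = card {i. i < N \<and> c i < - k} + chips_right N c (- k - 1)"
    unfolding chips_right_def by (simp add: card_Un_disjoint disjoint_iff)
  with mirrored show ?thesis by simp
qed

lemma rank_mirror_chips:
  assumes S: "S \<subseteq> {..<N}" and i: "i \<in> S"
  shows "rank (mirror_chips N S) (N - 1 - i) + rank S i + 1 = card S"
proof -
  have "{j \<in> mirror_chips N S. j < N - 1 - i} = (\<lambda>j. N - 1 - j) ` {j \<in> S. i < j}"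
    using S i unfolding mirror_chips_def by auto
  also have "card \<dots> = card {j \<in> S. i < j}"
    using S by (intro card_image inj_on_subset[OF inj_on_mirror]) auto
  finally show ?thesis
    using rank_add_card_greater[of S i] i finite_subset[OF S] by simp
qed

lemma fire_mirror_moved:
  assumes f: "fire t N c k S c'" and i: "i < N" "N - 1 - i \<in> S"
  shows "mirror_config N c' i = (if rank (mirror_chips N S) i < ew t (- k - 1) then - k - 1 else - k + 1)"
proof -
  have S: "S \<subseteq> {..<N}"
    using fire_subset[OF f] by auto
  have "rank (mirror_chips N S) i + rank S (N - 1 - i) + 1 = card S"
    using rank_mirror_chips[OF S i(2)] i(1) by simp
  then have swap: "rank (mirror_chips N S) i < ew t (- k - 1) \<longleftrightarrow> \<not> rank S (N - 1 - i) < ew t (k - 1)"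
    using fire_card[OF f] ew_mirror[of t k] by linarith
  have "mirror_config N c' i = - c' (N - 1 - i)"
    using i(1) by (simp add: mirror_config_def)
  also have "c' (N - 1 - i) = (if rank S (N - 1 - i) < ew t (k - 1) then k - 1 else k + 1)"
    using f i(2) by (simp add: fire_def)
  finally show ?thesis
    by (simp add: swap)
qed

lemma fire_mirror:
  assumes f: "fire t N c k S c'"
  shows "fire t N (mirror_config N c) (- k) (mirror_chips N S) (mirror_config N c')"
proof -
  let ?S' = "mirror_chips N S"
  have S: "S \<subseteq> {i. i < N \<and> c i = k}"
    by (rule fire_subset[OF f])
  then have S_N: "S \<subseteq> {..<N}"
    by auto
  have mem: "i \<in> ?S' \<longleftrightarrow> i < N \<and> N - 1 - i \<in> S" for i
    using mem_mirror_chips[OF S_N] .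
  have "ew t (- k) = ew t (k - 1)"
    using ew_mirror[of t "k - 1"] by simp
  then have card: "card ?S' = ew t (- k - 1) + ew t (- k)"
    using fire_card[OF f] ew_mirror[of t k] card_mirror_chips[OF S_N] by simp
  have "mirror_config N c' i =
      (if i \<in> ?S' then (if rank ?S' i < ew t (- k - 1) then - k - 1 else - k + 1)
       else mirror_config N c i)" for i
  proof (cases "i \<in> ?S'")
    case True
    then show ?thesis
      using fire_mirror_moved[OF f] mem by simp
  next
    case False
    then have "\<not> (i < N \<and> N - 1 - i \<in> S)"
      using mem by blast
    moreover have "i \<notin> S" if "\<not> i < N"
      using S_N that by auto
    ultimately show ?thesis
      using False fire_unmoved[OF f] by (simp add: mirror_config_def)
  qed
  moreover have "?S' \<subseteq> {i. i < N \<and> mirror_config N c i = - k}"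
  proof
    fix i assume "i \<in> ?S'"
    then have "i < N" "N - 1 - i \<in> S"
      using mem by blast+
    then show "i \<in> {i. i < N \<and> mirror_config N c i = - k}"
      using S by (auto simp: mirror_config_def)
  qed
  ultimately show ?thesis
    using card unfolding fire_def by (intro conjI ext) simp_all
qed

text \<open>
  \<open>g k\<close> is the net number of firings pushing chips across the edge \<open>{k, k+1}\<close> away
  from the origin; each of them moves \<open>ew t k\<close> chips over that edge.
\<close>

definition crossing_levels :: "nat \<Rightarrow> (nat \<Rightarrow> int) \<Rightarrow> (int \<Rightarrow> nat) \<Rightarrow> bool" where
  "crossing_levels t c g \<longleftrightarrow>
     (\<forall>k\<ge>0. chips_right (2 ^ (t + 2)) c k = g k * ew t k) \<and>
     (\<forall>k<0. chips_right (2 ^ (t + 2)) c k + g k * ew t k = 2 ^ (t + 2)) \<and>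
     (\<forall>k. g k \<le> 2) \<and>
     (\<forall>k. int t < k \<or> k < - int t - 1 \<longrightarrow> g k \<le> 1) \<and>
     (g 0 = 0 \<longleftrightarrow> g (-1) = 0)"

lemma crossing_levelsD:
  assumes "crossing_levels t c g"
  shows "0 \<le> k \<Longrightarrow> chips_right (2 ^ (t + 2)) c k = g k * ew t k"
    and "k < 0 \<Longrightarrow> chips_right (2 ^ (t + 2)) c k + g k * ew t k = 2 ^ (t + 2)"
    and "g k \<le> 2"
    and "int t < k \<or> k < - int t - 1 \<Longrightarrow> g k \<le> 1"
    and "g 0 = 0 \<longleftrightarrow> g (-1) = 0"
  using assms unfolding crossing_levels_def by auto

lemma crossing_levels_init: "crossing_levels t (\<lambda>_. 0) (\<lambda>_. 0)"
  by (simp add: crossing_levels_def chips_right_def)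

lemma crossing_levels_mirror:
  assumes lv: "crossing_levels t c g"
  shows "crossing_levels t (mirror_config (2 ^ (t + 2)) c) (\<lambda>k. g (- k - 1))"
  unfolding crossing_levels_def
proof (intro conjI allI impI)
  let ?N = "2 ^ (t + 2) :: nat"
  fix k :: int
  have mirrored: "chips_right ?N (mirror_config ?N c) k + chips_right ?N c (- k - 1) = ?N"
    by (rule chips_right_mirror)
  show "chips_right ?N (mirror_config ?N c) k = g (- k - 1) * ew t k" if "0 \<le> k"
    using mirrored crossing_levelsD(2)[OF lv, of "- k - 1"] that ew_mirror[of t k] by simp
  show "chips_right ?N (mirror_config ?N c) k + g (- k - 1) * ew t k = ?N" if "k < 0"
    using mirrored crossing_levelsD(1)[OF lv, of "- k - 1"] that ew_mirror[of t k] by simp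
  show "g (- k - 1) \<le> 2"
    by (rule crossing_levelsD(3)[OF lv])
  show "g (- k - 1) \<le> 1" if "int t < k \<or> k < - int t - 1"
    using crossing_levelsD(4)[OF lv, of "- k - 1"] that by linarith
next
  show "g (- 0 - 1) = 0 \<longleftrightarrow> g (- (- 1) - 1) = 0"
    using crossing_levelsD(5)[OF lv] by simp
qed

lemma crossing_levels_mirror_iff:
  "crossing_levels t (mirror_config (2 ^ (t + 2)) c) g \<longleftrightarrow> crossing_levels t c (\<lambda>k. g (- k - 1))"
  using crossing_levels_mirror[of t "mirror_config (2 ^ (t + 2)) c" g]
    crossing_levels_mirror[of t c "\<lambda>k. g (- k - 1)"] by auto

lemma fire_right_levels:
  assumes lv: "crossing_levels t c g" and f: "fire t (2 ^ (t + 2)) c s S c'" and s: "1 \<le> s"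
  shows "g (s - 1) = 2 \<and> g s \<le> 1 \<and> (int t < s \<longrightarrow> g s = 0)"
proof -
  let ?N = "2 ^ (t + 2) :: nat"
  have "ew t (s - 1) + ew t s + chips_right ?N c s \<le> chips_right ?N c (s - 1)"
    using fire_chips_at[OF f] chips_right_pred[of ?N c s] by simp
  then have fires: "ew t (s - 1) + ew t s + g s * ew t s \<le> g (s - 1) * ew t (s - 1)"
    using crossing_levelsD(1)[OF lv, of s] crossing_levelsD(1)[OF lv, of "s - 1"] s by simp
  have "g (s - 1) \<le> 2"
    by (rule crossing_levelsD(3)[OF lv])
  show ?thesis
  proof (cases "s \<le> int t")
    case True
    then have "(3 + g s) * ew t s \<le> (2 * g (s - 1)) * ew t s"
      using fires ew_pred[OF s True] by (simp add: algebra_simps)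
    then have "3 + g s \<le> 2 * g (s - 1)"
      using ew_pos[of t s] by simp
    with \<open>g (s - 1) \<le> 2\<close> True show ?thesis by simp
  next
    case False
    with fires \<open>g (s - 1) \<le> 2\<close> show ?thesis
      using ew_beyond[of t s] by simp
  qed
qed

lemma crossing_levels_fire_right:
  assumes lv: "crossing_levels t c g" and f: "fire t (2 ^ (t + 2)) c s S c'" and s: "1 \<le> s"
  shows "crossing_levels t c' (g(s := g s + 1, s - 1 := 1))"
  unfolding crossing_levels_def
proof (intro conjI allI impI)
  let ?N = "2 ^ (t + 2) :: nat" and ?g = "g(s := g s + 1, s - 1 := 1)"
  have levels: "g (s - 1) = 2" "g s \<le> 1" "int t < s \<Longrightarrow> g s = 0"
    using fire_right_levels[OF lv f s] by simp_all
  fix k :: int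
  show "chips_right ?N c' k = ?g k * ew t k" if "0 \<le> k"
    using fire_chips_right(1,2)[OF f] fire_chips_right(3)[OF f, of k] crossing_levelsD(1)[OF lv that]
      crossing_levelsD(1)[OF lv, of s] crossing_levelsD(1)[OF lv, of "s - 1"] s levels(1)
    by (cases "k = s"; cases "k = s - 1") simp_all
  show "chips_right ?N c' k + ?g k * ew t k = ?N" if "k < 0"
    using fire_chips_right(3)[OF f, of k] crossing_levelsD(2)[OF lv that] that s by simp
  show "?g k \<le> 2"
    using crossing_levelsD(3)[OF lv, of k] levels by simp
  show "?g k \<le> 1" if "int t < k \<or> k < - int t - 1"
    using crossing_levelsD(4)[OF lv that] levels that s by auto
next
  show "(g(s := g s + 1, s - 1 := 1)) 0 = 0 \<longleftrightarrow> (g(s := g s + 1, s - 1 := 1)) (-1) = 0"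
    using crossing_levelsD(5)[OF lv] fire_right_levels[OF lv f s] s by auto
qed

lemma fire_origin_levels:
  assumes lv: "crossing_levels t c g" and f: "fire t (2 ^ (t + 2)) c 0 S c'"
  shows "g 0 \<le> 1 \<and> g (-1) = g 0"
proof -
  let ?N = "2 ^ (t + 2) :: nat"
  have "2 ^ t + 2 ^ t + chips_right ?N c 0 \<le> chips_right ?N c (-1)"
    using fire_chips_at[OF f] chips_right_pred[of ?N c 0] by simp
  then have "(g (-1) + g 0 + 2) * 2 ^ t \<le> 4 * 2 ^ t"
    using crossing_levelsD(1)[OF lv, of 0] crossing_levelsD(2)[OF lv, of "-1"]
    by (simp add: algebra_simps power_add)
  then have "g (-1) + g 0 \<le> 2"
    by simp
  then show ?thesis
    using crossing_levelsD(5)[OF lv] by auto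
qed

lemma crossing_levels_fire_origin:
  assumes lv: "crossing_levels t c g" and f: "fire t (2 ^ (t + 2)) c 0 S c'"
  shows "crossing_levels t c' (g(0 := g 0 + 1, -1 := g 0 + 1))"
  unfolding crossing_levels_def
proof (intro conjI allI impI)
  let ?N = "2 ^ (t + 2) :: nat" and ?g = "g(0 := g 0 + 1, -1 := g 0 + 1)"
  have levels: "g 0 \<le> 1" "g (-1) = g 0"
    using fire_origin_levels[OF lv f] by simp_all
  fix k :: int
  show "chips_right ?N c' k = ?g k * ew t k" if "0 \<le> k"
    using fire_chips_right(1)[OF f] fire_chips_right(3)[OF f, of k] crossing_levelsD(1)[OF lv that] that
    by (cases "k = 0") simp_all
  show "chips_right ?N c' k + ?g k * ew t k = ?N" if "k < 0"
    using fire_chips_right(2)[OF f] fire_chips_right(3)[OF f, of k] crossing_levelsD(2)[OF lv that] that levels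
    by (cases "k = -1") (simp_all add: algebra_simps)
  show "?g k \<le> 2"
    using crossing_levelsD(3)[OF lv, of k] levels by simp
  show "?g k \<le> 1" if "int t < k \<or> k < - int t - 1"
    using crossing_levelsD(4)[OF lv that] that by auto
qed simp

lemma crossing_levels_fire:
  assumes lv: "crossing_levels t c g" and f: "fire t (2 ^ (t + 2)) c s S c'"
  shows "\<exists>g'. crossing_levels t c' g'"
proof -
  let ?N = "2 ^ (t + 2) :: nat"
  consider "1 \<le> s" | "s = 0" | "s \<le> -1" by linarith
  then show ?thesis
  proof cases
    case 1
    then show ?thesis using crossing_levels_fire_right[OF lv f] by blast
  next
    case 2
    then show ?thesis using crossing_levels_fire_origin lv f by blast
  next
    case 3
    have "crossing_levels t (mirror_config ?N c) (\<lambda>k. g (- k - 1))"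
      by (rule crossing_levels_mirror[OF lv])
    moreover have "fire t ?N (mirror_config ?N c) (- s) (mirror_chips ?N S) (mirror_config ?N c')"
      by (rule fire_mirror[OF f])
    ultimately obtain g' where "crossing_levels t (mirror_config ?N c') g'"
      using crossing_levels_fire_right 3 by fastforce
    then show ?thesis
      using crossing_levels_mirror_iff by blast
  qed
qed

definition largest_chips_right :: "nat \<Rightarrow> (nat \<Rightarrow> int) \<Rightarrow> bool" where
  "largest_chips_right t c \<longleftrightarrow>
     (\<forall>i. 2 ^ (t + 2) - 2 ^ t \<le> i \<and> i < 2 ^ (t + 2) \<longrightarrow> 0 \<le> c i) \<and>
     (\<forall>k i. 0 \<le> k \<and> k \<le> int t \<and> chips_right (2 ^ (t + 2)) c k = 2 * ew t k \<and>
        2 ^ (t + 2) - ew t k \<le> i \<and> i < 2 ^ (t + 2) \<longrightarrow> k < c i)"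

lemma largest_chips_rightD:
  assumes "largest_chips_right t c"
  shows "2 ^ (t + 2) - 2 ^ t \<le> i \<Longrightarrow> i < 2 ^ (t + 2) \<Longrightarrow> 0 \<le> c i"
    and "0 \<le> k \<Longrightarrow> k \<le> int t \<Longrightarrow> chips_right (2 ^ (t + 2)) c k = 2 * ew t k \<Longrightarrow>
      2 ^ (t + 2) - ew t k \<le> i \<Longrightarrow> i < 2 ^ (t + 2) \<Longrightarrow> k < c i"
  using assms unfolding largest_chips_right_def by blast+

lemma largest_chips_right_init: "largest_chips_right t (\<lambda>_. 0)"
proof -
  have "chips_right N (\<lambda>_. 0) k \<noteq> 2 * ew t k" if "0 \<le> k" for N k
    using ew_pos[of t k] that by (simp add: chips_right_def)
  then show ?thesis
    unfolding largest_chips_right_def by blast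
qed

lemma fire_all_moves_largest_right:
  assumes f: "fire t N c k S c'" and all: "chips_at N c k \<le> ew t (k - 1) + ew t k"
    and i: "N - ew t k \<le> i" "i < N" "k \<le> c i"
  shows "k < c' i"
proof (cases "c i = k")
  case True
  then have "i \<in> S"
    using fire_takes_all[OF f all] i(2) by simp
  then show ?thesis
    using fire_largest_right[OF f _ i(1)] by simp
next
  case False
  then have "i \<notin> S"
    using fire_subset[OF f] by auto
  then show ?thesis
    using fire_unmoved[OF f] False i(3) by simp
qed

lemma refire_origin_chips_at:
  assumes lv: "crossing_levels t c g" and f: "fire t (2 ^ (t + 2)) c 0 S c'"
    and fired: "0 < chips_right (2 ^ (t + 2)) c 0"
  shows "chips_at (2 ^ (t + 2)) c 0 = 2 * 2 ^ t"
proof -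
  let ?N = "2 ^ (t + 2) :: nat"
  have "g 0 \<noteq> 0"
    using fired crossing_levelsD(1)[OF lv, of 0] by auto
  then have "g 0 = 1" "g (-1) = 1"
    using fire_origin_levels[OF lv f] by auto
  then show ?thesis
    using chips_right_pred[of ?N c 0] crossing_levelsD(1)[OF lv, of 0]
      crossing_levelsD(2)[OF lv, of "-1"] by (simp add: power_add)
qed

lemma refire_right_chips:
  assumes lv: "crossing_levels t c g" and f: "fire t (2 ^ (t + 2)) c k S c'"
    and k: "1 \<le> k" "k \<le> int t" and fired: "0 < chips_right (2 ^ (t + 2)) c k"
  shows "chips_right (2 ^ (t + 2)) c (k - 1) = 2 * ew t (k - 1)"
    and "chips_at (2 ^ (t + 2)) c k = ew t (k - 1) + ew t k"
proof -
  let ?N = "2 ^ (t + 2) :: nat"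
  have "g k \<noteq> 0"
    using fired crossing_levelsD(1)[OF lv, of k] k by auto
  then have "g (k - 1) = 2" "g k = 1"
    using fire_right_levels[OF lv f k(1)] by auto
  then show right: "chips_right ?N c (k - 1) = 2 * ew t (k - 1)"
    and "chips_at ?N c k = ew t (k - 1) + ew t k"
    using crossing_levelsD(1)[OF lv, of "k - 1"] crossing_levelsD(1)[OF lv, of k] k
      chips_right_pred[of ?N c k] ew_pred[OF k] by simp_all
qed

lemma refire_moves_largest_right:
  assumes lv: "crossing_levels t c g" and lr: "largest_chips_right t c"
    and f: "fire t (2 ^ (t + 2)) c k S c'" and k: "0 \<le> k" "k \<le> int t"
    and fired: "0 < chips_right (2 ^ (t + 2)) c k"
    and i: "2 ^ (t + 2) - ew t k \<le> i" "i < 2 ^ (t + 2)"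
  shows "k < c' i"
proof (cases "k = 0")
  case True
  have "0 \<le> c i"
    using largest_chips_rightD(1)[OF lr] i True by simp
  then show ?thesis
    using fire_all_moves_largest_right[OF f _ i] refire_origin_chips_at[OF lv] f fired True by simp
next
  case False
  then have k1: "1 \<le> k"
    using k by simp
  have "ew t (k - 1) = 2 * ew t k"
    by (rule ew_pred[OF k1 k(2)])
  then have "k - 1 < c i"
    using largest_chips_rightD(2)[OF lr _ _ refire_right_chips(1)[OF lv f k1 k(2) fired]] k1 k(2) i
    by simp
  then show ?thesis
    using fire_all_moves_largest_right[OF f _ i] refire_right_chips(2)[OF lv f k1 k(2) fired] by simp
qed

lemma fire_keeps_top_quarter_nonneg:
  assumes f: "fire t N c s S c'" and i: "N - 2 ^ t \<le> i" and nonneg: "0 \<le> c i"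
  shows "0 \<le> c' i"
proof (cases "i \<in> S")
  case True
  then have "c i = s" "c' i = s - 1 \<or> c' i = s + 1"
    using fire_moved[OF f] by auto
  moreover have "c' i = 1" if "s = 0"
    using fire_largest_right[OF f True] i that by simp
  ultimately show ?thesis
    using nonneg by (cases "s = 0") auto
next
  case False
  then show ?thesis
    using fire_unmoved[OF f False] nonneg by simp
qed

lemma largest_chips_right_fire:
  assumes lv: "crossing_levels t c g" and lr: "largest_chips_right t c"
    and f: "fire t (2 ^ (t + 2)) c s S c'"
  shows "largest_chips_right t c'"
  unfolding largest_chips_right_def
proof (intro conjI allI impI)
  fix i :: nat
  assume "2 ^ (t + 2) - 2 ^ t \<le> i \<and> i < 2 ^ (t + 2)"
  then show "0 \<le> c' i"
    using fire_keeps_top_quarter_nonneg[OF f] largest_chips_rightD(1)[OF lr] by simp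
next
  let ?N = "2 ^ (t + 2) :: nat"
  fix k i
  assume "0 \<le> k \<and> k \<le> int t \<and> chips_right ?N c' k = 2 * ew t k \<and> ?N - ew t k \<le> i \<and> i < ?N"
  then have k: "0 \<le> k" "k \<le> int t" and right': "chips_right ?N c' k = 2 * ew t k"
    and i: "?N - ew t k \<le> i" "i < ?N"
    by auto
  consider "s = k" | "s = k + 1" | "s \<noteq> k" "s \<noteq> k + 1" by blast
  then show "k < c' i"
  proof cases
    case 1
    then have "0 < chips_right ?N c k"
      using fire_chips_right(1)[OF f] right' ew_pos[of t k] by simp
    then show ?thesis
      using refire_moves_largest_right[OF lv lr] f 1 k i by blast
  next
    case 2
    have "chips_right ?N c' k + ew t k = chips_right ?N c k"
      using fire_chips_right(2)[OF f] 2 by simp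
    moreover have "chips_right ?N c k \<le> 2 * ew t k"
      using crossing_levelsD(1)[OF lv k(1)] crossing_levelsD(3)[OF lv, of k] by simp
    ultimately show ?thesis
      using right' ew_pos[of t k] by simp
  next
    case 3
    then have "k < c i"
      using fire_chips_right(3)[OF f, of k] right' largest_chips_rightD(2)[OF lr k] i by simp
    show ?thesis
    proof (cases "i \<in> S")
      case True
      then show ?thesis
        using fire_moved[OF f True] \<open>k < c i\<close> 3 by auto
    next
      case False
      then show ?thesis
        using fire_unmoved[OF f False] \<open>k < c i\<close> by simp
    qed
  qed
qed

definition legal_run :: "nat \<Rightarrow> nat \<Rightarrow> (int \<times> nat set) list \<Rightarrow> (nat \<Rightarrow> int) list \<Rightarrow> bool" where
  "legal_run t N moves cs \<longleftrightarrow>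
     length cs = Suc (length moves) \<and> cs ! 0 = (\<lambda>_. 0) \<and>
     (\<forall>n < length moves. fire t N (cs ! n) (fst (moves ! n)) (snd (moves ! n)) (cs ! Suc n))"

lemma complete_run_legal_run: "complete_run t N moves cs \<Longrightarrow> legal_run t N moves cs"
  by (simp add: complete_run_def legal_run_def)

lemma legal_run_fire:
  "legal_run t N moves cs \<Longrightarrow> n < length moves \<Longrightarrow>
    fire t N (cs ! n) (fst (moves ! n)) (snd (moves ! n)) (cs ! Suc n)"
  by (simp add: legal_run_def)

lemma legal_run_mirror:
  assumes run: "legal_run t N moves cs"
  shows "legal_run t N (map (\<lambda>(k, S). (- k, mirror_chips N S)) moves) (map (mirror_config N) cs)"
proof -
  have len: "length cs = Suc (length moves)"
    using run by (simp add: legal_run_def)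
  have "fire t N (map (mirror_config N) cs ! n) (- fst (moves ! n)) (mirror_chips N (snd (moves ! n)))
      (map (mirror_config N) cs ! Suc n)" if "n < length moves" for n
    using fire_mirror[OF legal_run_fire[OF run that]] len that by simp
  then show ?thesis
    using run len by (simp add: legal_run_def case_prod_beta)
qed

lemma legal_run_invariants:
  assumes run: "legal_run t (2 ^ (t + 2)) moves cs" and n: "n \<le> length moves"
  shows "(\<exists>g. crossing_levels t (cs ! n) g) \<and> largest_chips_right t (cs ! n)"
  using n
proof (induction n)
  case 0
  then show ?case
    using run crossing_levels_init largest_chips_right_init by (simp add: legal_run_def) blast
next
  case (Suc n)
  then obtain g where "crossing_levels t (cs ! n) g" "largest_chips_right t (cs ! n)"
    by auto
  moreover have "fire t (2 ^ (t + 2)) (cs ! n) (fst (moves ! n)) (snd (moves ! n)) (cs ! Suc n)"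
    using legal_run_fire[OF run] Suc.prems by simp
  ultimately show ?case
    using crossing_levels_fire largest_chips_right_fire by blast
qed

lemma legal_run_chips_right_persist:
  assumes run: "legal_run t N moves cs" and m: "m < n" "n \<le> length moves"
  shows "0 < chips_right N (cs ! n) (fst (moves ! m))"
  using m
proof (induction n)
  case 0
  then show ?case by simp
next
  case (Suc n)
  have f: "fire t N (cs ! n) (fst (moves ! n)) (snd (moves ! n)) (cs ! Suc n)"
    using legal_run_fire[OF run] Suc.prems by simp
  show ?case
  proof (cases "m = n")
    case True
    then show ?thesis
      using fire_chips_right(1)[OF f] ew_pos[of t "fst (moves ! n)"] by simp
  next
    case False
    then show ?thesis
      using Suc fire_keeps_chips_right_pos[OF f] by simp
  qed
qed

lemma legal_run_refire_moves_largest_right: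
  assumes run: "legal_run t (2 ^ (t + 2)) moves cs" and k: "0 \<le> k" "k \<le> int t"
    and fired: "m < n" "fst (moves ! m) = k" and n: "n < length moves" "fst (moves ! n) = k"
    and i: "2 ^ (t + 2) - 2 ^ nat (int t - k) \<le> i" "i < 2 ^ (t + 2)"
  shows "k < (cs ! Suc n) i"
proof -
  obtain g where "crossing_levels t (cs ! n) g" "largest_chips_right t (cs ! n)"
    using legal_run_invariants[OF run] n(1) by (meson less_imp_le)
  moreover have "0 < chips_right (2 ^ (t + 2)) (cs ! n) k"
    using legal_run_chips_right_persist[OF run fired(1)] fired(2) n(1) by simp
  moreover have "fire t (2 ^ (t + 2)) (cs ! n) k (snd (moves ! n)) (cs ! Suc n)"
    using legal_run_fire[OF run n(1)] n(2) by simp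
  ultimately show ?thesis
    using refire_moves_largest_right k i ew_inner[OF k] by simp
qed

lemma legal_run_refire_moves_smallest_left:
  assumes run: "legal_run t (2 ^ (t + 2)) moves cs" and k: "- int t \<le> k" "k \<le> 0"
    and fired: "m < n" "fst (moves ! m) = k" and n: "n < length moves" "fst (moves ! n) = k"
    and i: "i < 2 ^ nat (int t + k)"
  shows "(cs ! Suc n) i < k"
proof -
  let ?N = "2 ^ (t + 2) :: nat"
  let ?moves = "map (\<lambda>(k, S). (- k, mirror_chips ?N S)) moves" and ?cs = "map (mirror_config ?N) cs"
  have len: "length cs = Suc (length moves)"
    using run by (simp add: legal_run_def)
  have "2 ^ nat (int t + k) \<le> (2 :: nat) ^ t"
    using k by (intro power_increasing) auto
  with i have "i < 2 ^ t"
    by linarith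
  then have "i < ?N"
    by (simp add: power_add)
  have "- k < (?cs ! Suc n) (?N - 1 - i)"
  proof (rule legal_run_refire_moves_largest_right[OF legal_run_mirror[OF run]])
    show "fst (?moves ! m) = - k" "fst (?moves ! n) = - k"
      using fired n by (simp_all add: case_prod_beta)
    show "?N - 2 ^ nat (int t - - k) \<le> ?N - 1 - i"
      using i \<open>i < ?N\<close> by simp
  qed (use k fired n \<open>i < ?N\<close> in auto)
  then show ?thesis
    using len n(1) \<open>i < ?N\<close> by (simp add: mirror_config_def)
qed

lemma two_le_card_imp_ex_less:
  assumes "2 \<le> card {m. m \<le> (n :: nat) \<and> P m}"
  shows "\<exists>m<n. P m"
proof (rule ccontr)
  assume none: "\<not> (\<exists>m<n. P m)"
  have "{m. m \<le> n \<and> P m} \<subseteq> {n}"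
  proof
    fix m assume m: "m \<in> {m. m \<le> n \<and> P m}"
    then have "\<not> m < n"
      using none by blast
    with m show "m \<in> {n}"
      by simp
  qed
  then have "card {m. m \<le> n \<and> P m} \<le> card {n}"
    by (rule card_mono[rotated]) simp
  with assms show False by simp
qed

theorem lemma3p6:
  fixes t :: nat and moves :: "(int \<times> nat set) list" and cs :: "(nat \<Rightarrow> int) list"
  assumes "complete_run t (2 ^ (t + 2)) moves cs"
  shows "(\<forall>k j n. 0 \<le> k \<and> k \<le> int t \<and> 2 \<le> j \<and> int j \<le> 2 * (int t - k) + 3 \<and>
            n < length moves \<and> fst (moves ! n) = k \<and>
            card {m. m \<le> n \<and> fst (moves ! m) = k} = j \<longrightarrow>
            (\<forall>i. 2 ^ (t + 2) - 2 ^ nat (int t - k) \<le> i \<and> i < 2 ^ (t + 2) \<longrightarrow>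
                 (cs ! Suc n) i > k))
       \<and> (\<forall>k j n. - int t \<le> k \<and> k \<le> 0 \<and> 2 \<le> j \<and> int j \<le> 2 * (int t + k) + 3 \<and>
            n < length moves \<and> fst (moves ! n) = k \<and>
            card {m. m \<le> n \<and> fst (moves ! m) = k} = j \<longrightarrow>
            (\<forall>i. i < 2 ^ nat (int t + k) \<longrightarrow> (cs ! Suc n) i < k))"
proof -
  have run: "legal_run t (2 ^ (t + 2)) moves cs"
    using assms by (rule complete_run_legal_run)
  show ?thesis
  proof (intro conjI allI impI; elim conjE)
    fix k :: int and j n i :: nat
    assume "0 \<le> k" "k \<le> int t" "2 \<le> j" "n < length moves" "fst (moves ! n) = k"
      "card {m. m \<le> n \<and> fst (moves ! m) = k} = j"
      and "2 ^ (t + 2) - 2 ^ nat (int t - k) \<le> i" "i < 2 ^ (t + 2)"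
    moreover obtain m where "m < n" "fst (moves ! m) = k"
      using two_le_card_imp_ex_less[of n "\<lambda>m. fst (moves ! m) = k"] calculation by blast
    ultimately show "(cs ! Suc n) i > k"
      using legal_run_refire_moves_largest_right[OF run] by blast
  next
    fix k :: int and j n i :: nat
    assume "- int t \<le> k" "k \<le> 0" "2 \<le> j" "n < length moves" "fst (moves ! n) = k"
      "card {m. m \<le> n \<and> fst (moves ! m) = k} = j" and "i < 2 ^ nat (int t + k)"
    moreover obtain m where "m < n" "fst (moves ! m) = k"
      using two_le_card_imp_ex_less[of n "\<lambda>m. fst (moves ! m) = k"] calculation by blast
    ultimately show "(cs ! Suc n) i < k"
      using legal_run_refire_moves_smallest_left[OF run] by blast
  qed
qed

end
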